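(* Let $a,c,p\in\mathbb{C}$ with $-c\notin\mathbb{N}\cup\{0\}$ and $c\neq2$. Write $\cosh(pz)M(a,c;z)=\sum_{n=0}^\infty u_nz^n$, $z\in\mathbb{C}$. Then $u_0=1$, $u_1=\frac ac$, $u_2=\frac{a(a+1)}{2c(c+1)}+\frac{p^2}{2}$, $u_3=\frac{ap^2}{2c}+\frac{a(a+1)(a+2)}{6c(c+1)(c+2)}$, $u_4=\frac{a(a+1)p^2}{4c(c+1)}+\frac{a(a+1)(a+2)(a+3)}{24c(c+1)(c+2)(c+3)}+\frac{p^4}{24}$, $u_5=\frac{ap^4}{24c}+\frac{a(a+1)(a+2)p^2}{12c(c+1)(c+2)}+\frac{a(a+1)(a+2)(a+3)(a+4)}{120c(c+1)(c+2)(c+3)(c+4)}$, and for all integers $n\ge5$, \[ u_{n+1}=\sum_{i=0}^5\beta_i(n)u_{n-i}, \] where, with $D(n)=(c-2)c\,n(n+1)(c+n-1)(c+n)$, \[ \beta_0(n)=\frac{2\left(a\left(c^2-2cn+c-2(n-2)^2\right)+c(n-1)(2c+n-5)\right)}{(c-2)c(n+1)(c+n)}, \] \[ \beta_1(n)=\frac{1}{D(n)}\Big[(n-4)(n-3)(n-2)(n-1)(4p^2-1)+2(n-3)(n-2)(n-1)\big(4a+c(4p^2-3)\big) +(n-2)(n-1)\big(8a^2+a(4c+6)+c(6(c-2)p^2-6c+1)\big) +2(n-1)\big(a^2(4c-2)-3a(c-1)c+(c-2)c(c+1)p^2\big) +(c-2)\big(-a^2(c+2)+ac+c^2(c+1)p^2\big)\Big],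 \] \[ \beta_2(n)=\frac{1}{D(n)}\Big[2p^2(c-3)\big(a(3c+8)-2c^2+c-32\big)+2p^2\big(n(10a+c(31-3c)-104)-6(c-6)n^2-4n^3\big) -2(a+n-3)\big(2a^2-a(c-2n+3)-(n-2)(2c+n-4)\big)\Big], \] \[ \beta_3(n)=-\frac{1}{D(n)}\Big[p^2\big(-12a^2+2a(6c+5)-6c^2+c\big)+2(n-3)\big(a+c(4p^2-3)p^2\big) +(a-1)a+5(c-2)cp^4+(n-4)(n-3)(8p^4-6p^2+1)\Big], \] \[ \beta_4(n)=\frac{2p^2\left(p^2(-6a+5c+4(n-4))+3a-2c-n+4\right)}{D(n)},\qquad \beta_5(n)=\frac{4p^6-5p^4+p^2}{D(n)}. \]
   Context: For $a\in\mathbb{C}$, $(a)_n=a(a+1)\cdots(a+n-1)$ denotes the Pochhammer symbol, with $(a)_0=1$. For $a,c\in\mathbb{C}$ with $-c\notin\mathbb{N}\cup\{0\}$, the confluent hypergeometric (Kummer) function is $M(a,c;z)=\sum_{n=0}^\infty \frac{(a)_n}{(c)_n\,n!}z^n$, $z\in\mathbb{C}$. *)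

theory Defs
  imports "HOL-Analysis.Analysis"
begin

definition kummerM :: "complex \<Rightarrow> complex \<Rightarrow> complex \<Rightarrow> complex" where
  "kummerM a c z = (\<Sum>n. pochhammer a n / (pochhammer c n * fact n) * z ^ n)"

definition Dn :: "complex \<Rightarrow> nat \<Rightarrow> complex" where
  "Dn c n = (c - 2) * c * of_nat n * (of_nat n + 1) * (c + of_nat n - 1) * (c + of_nat n)"

definition beta0 :: "complex \<Rightarrow> complex \<Rightarrow> nat \<Rightarrow> complex" where
  "beta0 a c n = (let m = (of_nat n :: complex) in
     2 * (a * (c^2 - 2*c*m + c - 2*(m - 2)^2) + c*(m - 1)*(2*c + m - 5))
     / ((c - 2) * c * (m + 1) * (c + m)))"

definition beta1 :: "complex \<Rightarrow> complex \<Rightarrow> complex \<Rightarrow> nat \<Rightarrow> complex" where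
  "beta1 a c p n = (let m = (of_nat n :: complex) in
     ((m - 4)*(m - 3)*(m - 2)*(m - 1)*(4*p^2 - 1)
      + 2*(m - 3)*(m - 2)*(m - 1)*(4*a + c*(4*p^2 - 3))
      + (m - 2)*(m - 1)*(8*a^2 + a*(4*c + 6) + c*(6*(c - 2)*p^2 - 6*c + 1))
      + 2*(m - 1)*(a^2*(4*c - 2) - 3*a*(c - 1)*c + (c - 2)*c*(c + 1)*p^2)
      + (c - 2)*(- (a^2*(c + 2)) + a*c + c^2*(c + 1)*p^2)) / Dn c n)"

definition beta2 :: "complex \<Rightarrow> complex \<Rightarrow> complex \<Rightarrow> nat \<Rightarrow> complex" where
  "beta2 a c p n = (let m = (of_nat n :: complex) in
     (2*p^2*(c - 3)*(a*(3*c + 8) - 2*c^2 + c - 32)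
      + 2*p^2*(m*(10*a + c*(31 - 3*c) - 104) - 6*(c - 6)*m^2 - 4*m^3)
      - 2*(a + m - 3)*(2*a^2 - a*(c - 2*m + 3) - (m - 2)*(2*c + m - 4))) / Dn c n)"

definition beta3 :: "complex \<Rightarrow> complex \<Rightarrow> complex \<Rightarrow> nat \<Rightarrow> complex" where
  "beta3 a c p n = (let m = (of_nat n :: complex) in
     - ((p^2*(-12*a^2 + 2*a*(6*c + 5) - 6*c^2 + c)
        + 2*(m - 3)*(a + c*(4*p^2 - 3)*p^2)
        + (a - 1)*a + 5*(c - 2)*c*p^4
        + (m - 4)*(m - 3)*(8*p^4 - 6*p^2 + 1)) / Dn c n))"

definition beta4 :: "complex \<Rightarrow> complex \<Rightarrow> complex \<Rightarrow> nat \<Rightarrow> complex" where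
  "beta4 a c p n = (let m = (of_nat n :: complex) in
     2*p^2*(p^2*(-6*a + 5*c + 4*(m - 4)) + 3*a - 2*c - m + 4) / Dn c n)"

definition beta5 :: "complex \<Rightarrow> complex \<Rightarrow> nat \<Rightarrow> complex" where
  "beta5 c p n = (4*p^6 - 5*p^4 + p^2) / Dn c n"

end

theory Submission
  imports Defs "HOL-Complex_Analysis.Laurent_Convergence"
begin

(* Since cosh(pz) = (e^(pz) + e^(-pz))/2, the coefficients u_n are the averages of the
   coefficients of G_w = e^(wz) M(a,c;z) for w = p and w = -p.  Kummer's equation
   zM'' + (c - z)M' - aM = 0 turns into zG'' + (c - (2w+1)z)G' + ((w^2+w)z - (cw+a))G = 0,
   i.e. a three-term recurrence for the coefficients of G_w whose coefficients involve odd
   powers of w.  A suitable combination of five consecutive instances of it is a six-term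
   recurrence whose coefficients beta_i depend on w only through w^2; being linear, it is
   then inherited by the average u_n. *)

definition kummer_fps :: "complex \<Rightarrow> complex \<Rightarrow> complex fps" where
  "kummer_fps a c = Abs_fps (\<lambda>n. pochhammer a n / (pochhammer c n * fact n))"

lemma eval_kummer_fps: "eval_fps (kummer_fps a c) = kummerM a c"
  by (simp add: fun_eq_iff eval_fps_def kummer_fps_def kummerM_def)

lemma kummer_fps_nth_Suc:
  assumes "\<forall>k::nat. c \<noteq> - of_nat k"
  shows "(of_nat n + 1) * (of_nat n + c) * fps_nth (kummer_fps a c) (Suc n)
           = (a + of_nat n) * fps_nth (kummer_fps a c) n"
proof -
  have "pochhammer c n \<noteq> 0" using assms by (auto simp: pochhammer_eq_0_iff)
  moreover have "of_nat n + c \<noteq> 0" using assms by (metis add.commute add_eq_0_iff2)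
  moreover have "(of_nat n + 1 :: complex) \<noteq> 0" by (metis of_nat_Suc of_nat_neq_0 add.commute)
  moreover have "fps_nth (kummer_fps a c) (Suc n) = (a + of_nat n) * pochhammer a n
      / ((of_nat n + c) * pochhammer c n * ((of_nat n + 1) * fact n))"
    by (simp add: kummer_fps_def pochhammer_rec' fact_Suc add_ac mult_ac)
  ultimately show ?thesis
    by (simp add: kummer_fps_def)
qed

lemma kummer_fps_nth_0_to_5:
  "fps_nth (kummer_fps a c) 0 = 1"
  "fps_nth (kummer_fps a c) 1 = a / c"
  "fps_nth (kummer_fps a c) 2 = a*(a+1) / (2*c*(c+1))"
  "fps_nth (kummer_fps a c) 3 = a*(a+1)*(a+2) / (6*c*(c+1)*(c+2))"
  "fps_nth (kummer_fps a c) 4 = a*(a+1)*(a+2)*(a+3) / (24*c*(c+1)*(c+2)*(c+3))"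
  "fps_nth (kummer_fps a c) 5 = a*(a+1)*(a+2)*(a+3)*(a+4) / (120*c*(c+1)*(c+2)*(c+3)*(c+4))"
  by (simp_all add: kummer_fps_def numeral_eq_Suc pochhammer_Suc fact_Suc mult_ac)
    (simp_all add: algebra_simps)

lemma summable_if_ratio_tendsto_0:
  fixes f r :: "nat \<Rightarrow> 'a::{banach, real_normed_div_algebra}"
  assumes f_Suc: "\<And>n. f (Suc n) = r n * f n" and "r \<longlonglongrightarrow> 0"
  shows "summable f"
proof -
  have "eventually (\<lambda>n. norm (r n) < 1/2) sequentially"
    using \<open>r \<longlonglongrightarrow> 0\<close> by (intro order_tendstoD(2)[OF tendsto_norm_zero]) simp_all
  then obtain N where N: "\<forall>n\<ge>N. norm (r n) < 1/2"
    unfolding eventually_sequentially by blast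
  show ?thesis
  proof (rule summable_ratio_test[of "1/2" N])
    fix n assume "n \<ge> N"
    then have "norm (r n) * norm (f n) \<le> 1/2 * norm (f n)"
      using N by (intro mult_right_mono) auto
    then show "norm (f (Suc n)) \<le> 1/2 * norm (f n)"
      by (simp add: f_Suc norm_mult)
  qed simp
qed

lemma fps_conv_radius_kummer_fps:
  assumes hc: "\<forall>k::nat. c \<noteq> - of_nat k"
  shows "fps_conv_radius (kummer_fps a c) = \<infinity>"
  unfolding fps_conv_radius_def
proof (rule conv_radius_inftyI'')
  fix z :: complex
  define r where "r n = z * (1 + (a - c) / (of_nat n + c)) / (of_nat n + 1)" for n :: nat
  show "summable (\<lambda>n. fps_nth (kummer_fps a c) n * z ^ n)"
  proof (rule summable_if_ratio_tendsto_0)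
    fix n
    have "of_nat n + c \<noteq> 0" using hc by (metis add.commute add_eq_0_iff2)
    moreover have "(of_nat n + 1 :: complex) \<noteq> 0" by (metis of_nat_Suc of_nat_neq_0 add.commute)
    ultimately have "fps_nth (kummer_fps a c) (Suc n)
        = (a + of_nat n) * fps_nth (kummer_fps a c) n / ((of_nat n + 1) * (of_nat n + c))"
      using kummer_fps_nth_Suc[OF hc, of n a] by (simp add: eq_divide_eq ac_simps)
    moreover have "r n = z * (a + of_nat n) / ((of_nat n + 1) * (of_nat n + c))"
      using \<open>of_nat n + c \<noteq> 0\<close> by (simp add: r_def field_simps)
    ultimately show
      "fps_nth (kummer_fps a c) (Suc n) * z ^ Suc n = r n * (fps_nth (kummer_fps a c) n * z ^ n)"
      by simp
  next
    have to_infinity: "filterlim (\<lambda>n. of_nat n + d) at_infinity sequentially" for d :: complex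
      by (rule tendsto_add_filterlim_at_infinity'[OF tendsto_of_nat tendsto_const])
    have "(\<lambda>n. z * (1 + (a - c) / (of_nat n + c))) \<longlonglongrightarrow> z * (1 + 0)"
      by (intro tendsto_mult tendsto_add tendsto_divide_0[OF tendsto_const to_infinity] tendsto_const)
    then show "r \<longlonglongrightarrow> 0"
      unfolding r_def by (rule tendsto_divide_0[OF _ to_infinity])
  qed
qed

lemma kummerM_has_fps_expansion:
  assumes "\<forall>k::nat. c \<noteq> - of_nat k"
  shows "kummerM a c has_fps_expansion kummer_fps a c"
  using eval_fps_has_fps_expansion[of "kummer_fps a c"]
  by (simp add: fps_conv_radius_kummer_fps[OF assms] eval_kummer_fps)

lemma has_fps_expansion_if_sums:
  fixes f :: "'a::{banach, real_normed_div_algebra} \<Rightarrow> 'a"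
  assumes "\<And>z. (\<lambda>n. u n * z ^ n) sums f z"
  shows "f has_fps_expansion Abs_fps u"
proof -
  have "fps_conv_radius (Abs_fps u) = \<infinity>"
    unfolding fps_conv_radius_def using assms by (auto intro: conv_radius_inftyI'' sums_summable)
  moreover have "eval_fps (Abs_fps u) z = f z" for z
    using assms[of z] by (simp add: eval_fps_def sums_iff)
  ultimately show ?thesis by (simp add: has_fps_expansion_def)
qed

lemma cosh_has_fps_expansion:
  "(\<lambda>z::complex. cosh (p * z)) has_fps_expansion fps_const (1/2) * (fps_exp p + fps_exp (- p))"
proof -
  have "(\<lambda>z. cosh (p * z)) = (\<lambda>z. 1/2 * (exp (p * z) + exp (- p * z)))"
    by (simp add: fun_eq_iff cosh_field_def)
  then show ?thesis by (subst \<open>_ = _\<close>) (intro fps_expansion_intros)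
qed

lemma cosh_mult_fps_nth_0_to_5:
  fixes p :: "'a::field_char_0" and F :: "'a fps"
  defines "U \<equiv> fps_const (1/2) * (fps_exp p + fps_exp (- p)) * F"
  shows "fps_nth U 0 = fps_nth F 0" "fps_nth U 1 = fps_nth F 1"
    "fps_nth U 2 = fps_nth F 2 + p^2/2 * fps_nth F 0"
    "fps_nth U 3 = fps_nth F 3 + p^2/2 * fps_nth F 1"
    "fps_nth U 4 = fps_nth F 4 + p^2/2 * fps_nth F 2 + p^4/24 * fps_nth F 0"
    "fps_nth U 5 = fps_nth F 5 + p^2/2 * fps_nth F 3 + p^4/24 * fps_nth F 1"
  unfolding U_def by (simp_all add: fps_mult_nth numeral_eq_Suc fact_Suc field_simps)

lemma kummer_fps_ode:
  assumes "\<forall>k::nat. c \<noteq> - of_nat k"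
  shows "fps_X * fps_deriv (fps_deriv (kummer_fps a c))
           + (fps_const c - fps_X) * fps_deriv (kummer_fps a c) - fps_const a * kummer_fps a c = 0"
proof (rule fps_ext)
  fix n
  show "fps_nth (fps_X * fps_deriv (fps_deriv (kummer_fps a c))
           + (fps_const c - fps_X) * fps_deriv (kummer_fps a c) - fps_const a * kummer_fps a c) n
        = fps_nth 0 n"
    using kummer_fps_nth_Suc[OF assms, of n a] kummer_fps_nth_Suc[OF assms, of "n - 1" a]
    by (cases n) (simp_all add: algebra_simps)
qed

lemma fps_exp_mult_kummer_ode:
  fixes F :: "'a::field_char_0 fps" and a c w :: 'a
  assumes "fps_X * fps_deriv (fps_deriv F) + (fps_const c - fps_X) * fps_deriv F - fps_const a * F = 0"
  defines "G \<equiv> fps_exp w * F"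
  shows "fps_X * fps_deriv (fps_deriv G) + (fps_const c - fps_const (2*w + 1) * fps_X) * fps_deriv G
           + (fps_const (w^2 + w) * fps_X - fps_const (c*w + a)) * G = 0"
proof -
  have "fps_X * fps_deriv (fps_deriv G) + (fps_const c - fps_const (2*w + 1) * fps_X) * fps_deriv G
           + (fps_const (w^2 + w) * fps_X - fps_const (c*w + a)) * G
        = fps_exp w
          * (fps_X * fps_deriv (fps_deriv F) + (fps_const c - fps_X) * fps_deriv F - fps_const a * F)"
    unfolding G_def
    by (simp add: algebra_simps power2_eq_square flip: fps_const_mult fps_const_add fps_numeral_fps_const)
  with assms(1) show ?thesis by simp
qed

definition exp_kummer_residual ::
    "'a::comm_ring_1 \<Rightarrow> 'a \<Rightarrow> 'a \<Rightarrow> 'a \<Rightarrow> 'a \<Rightarrow> 'a \<Rightarrow> 'a \<Rightarrow> 'a" where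
  "exp_kummer_residual a c w m y0 y1 y2
     = (m + 1) * (m + c) * y2 - ((2*w + 1) * m + c*w + a) * y1 + w*(w + 1) * y0"

lemma exp_kummer_ode_imp_residual_eq_0:
  fixes G :: "'a::field_char_0 fps"
  assumes "fps_X * fps_deriv (fps_deriv G) + (fps_const c - fps_const (2*w + 1) * fps_X) * fps_deriv G
           + (fps_const (w^2 + w) * fps_X - fps_const (c*w + a)) * G = 0"
  shows "exp_kummer_residual a c w (of_nat k + 1) (fps_nth G k) (fps_nth G (k + 1)) (fps_nth G (k + 2))
           = 0"
proof -
  have "fps_nth (fps_X * fps_deriv (fps_deriv G)
           + (fps_const c - fps_const (2*w + 1) * fps_X) * fps_deriv G
           + (fps_const (w^2 + w) * fps_X - fps_const (c*w + a)) * G) (Suc k) = 0"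
    by (simp only: assms fps_zero_nth)
  then show ?thesis
    by (simp add: exp_kummer_residual_def algebra_simps power2_eq_square numeral_2_eq_2)
qed

lemma Dn_nonzero:
  assumes "\<forall>k::nat. c \<noteq> - of_nat k" and "c \<noteq> 2" and "n \<ge> 1"
  shows "Dn c n \<noteq> 0"
proof -
  have "c + of_nat m \<noteq> 0" for m using assms(1) by (metis add_eq_0_iff2)
  from this[of n] this[of "n - 1"] have "c + of_nat n \<noteq> 0" "c + of_nat n - 1 \<noteq> 0"
    using assms(3) by (simp_all add: of_nat_diff algebra_simps)
  moreover have "c \<noteq> 0" using assms(1) by (metis add.inverse_neutral of_nat_0)
  moreover have "(of_nat n + 1 :: complex) \<noteq> 0" by (metis of_nat_Suc of_nat_neq_0 add.commute)
  ultimately show ?thesis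
    using assms(2,3) by (simp add: Dn_def)
qed

lemma beta0_eq_divide_Dn:
  fixes a c :: complex and n :: nat
  defines "N \<equiv> of_nat n :: complex"
  assumes "Dn c n \<noteq> 0"
  shows "beta0 a c n
    = 2 * (a*(c^2 - 2*c*N + c - 2*(N - 2)^2) + c*(N - 1)*(2*c + N - 5)) * N * (c + N - 1) / Dn c n"
proof -
  have D: "Dn c n = (c - 2) * c * (N + 1) * (c + N) * (N * (c + N - 1))"
    by (simp add: Dn_def N_def ac_simps)
  with assms(2) have "N * (c + N - 1) \<noteq> 0" by auto
  then show ?thesis
    unfolding beta0_def Let_def N_def[symmetric] D by (simp add: ac_simps)
qed

(* The multipliers are a certificate obtained by solving a linear system; unlike the beta_i,
   they are not even in w. *)
lemma six_term_combination:
  fixes a c w :: complex and x :: "nat \<Rightarrow> complex" and n :: nat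
  defines "N \<equiv> of_nat n :: complex"
  defines "R \<equiv> exp_kummer_residual a c w"
  assumes D: "Dn c n \<noteq> 0"
  shows "Dn c n * (x (n + 1) - (beta0 a c n * x n + beta1 a c w n * x (n - 1)
          + beta2 a c w n * x (n - 2) + beta3 a c w n * x (n - 3) + beta4 a c w n * x (n - 4)
          + beta5 c w n * x (n - 5)))
    = N*c*(c - 2)*(c + N - 1) * R N (x (n - 1)) (x n) (x (n + 1))
    + (- 10*c + 4*c^2 - 2*c^2*w + c^3*w + 16*a - 4*a*c - a*c^2 + 10*N*c - 4*N*c*w - 3*N*c^2
       + 2*N*c^2*w - 16*N*a + 4*N*a*c - 2*N^2*c + 4*N^2*a)
      * R (N - 1) (x (n - 2)) (x (n - 1)) (x n)
    + (12 - 48*w^2 - 8*c + 10*c*w + 10*c*w^2 - 3*c^2*w + c^2*w^2 + 10*a - 16*a*w + 2*a*c + 4*a*c*w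
       - 4*a^2 - 7*N + 28*N*w^2 + 3*N*c - 4*N*c*w - 4*N*c*w^2 - 4*N*a + 8*N*a*w + N^2 - 4*N^2*w^2)
      * R (N - 2) (x (n - 3)) (x (n - 2)) (x (n - 1))
    + (4 - 8*w - 16*w^2 + 32*w^3 + 3*c*w - 2*c*w^2 - 4*c*w^3 - a - 4*a*w + 8*a*w^2 - N + 2*N*w
       + 4*N*w^2 - 8*N*w^3) * R (N - 3) (x (n - 4)) (x (n - 3)) (x (n - 2))
    + w*(w - 1)*(1 - 4*w^2) * R (N - 4) (x (n - 5)) (x (n - 4)) (x (n - 3))"
proof -
  have clear_denominators: "d * (y - (p0/d*y0 + p1/d*y1 + p2/d*y2 + p3/d*y3 + p4/d*y4 + p5/d*y5))
      = d*y - (p0*y0 + p1*y1 + p2*y2 + p3*y3 + p4*y4 + p5*y5)"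
    if "d \<noteq> 0" for d y p0 p1 p2 p3 p4 p5 y0 y1 y2 y3 y4 y5 :: complex
    using that by (simp add: field_simps)
  show ?thesis
    unfolding beta0_eq_divide_Dn[OF D] beta1_def beta2_def beta3_def beta4_def beta5_def Let_def
      minus_divide_left clear_denominators[OF D] N_def[symmetric]
    unfolding Dn_def R_def exp_kummer_residual_def N_def[symmetric]
    by algebra
qed

lemma six_term_recurrence:
  fixes a c w :: complex and x :: "nat \<Rightarrow> complex"
  assumes rec: "\<And>k. exp_kummer_residual a c w (of_nat k + 1) (x k) (x (k + 1)) (x (k + 2)) = 0"
    and D: "Dn c n \<noteq> 0" and "n \<ge> 5"
  shows "x (n + 1) = beta0 a c n * x n + beta1 a c w n * x (n - 1) + beta2 a c w n * x (n - 2)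
                    + beta3 a c w n * x (n - 3) + beta4 a c w n * x (n - 4) + beta5 c w n * x (n - 5)"
proof -
  define R where "R = exp_kummer_residual a c w"
  have rec_at: "R m (x i) (x j) (x l) = 0" if "m = of_nat i + 1" "j = i + 1" "l = i + 2" for m i j l
    using rec[of i] unfolding R_def that .
  have "R (of_nat n) (x (n - 1)) (x n) (x (n + 1)) = 0"
    "R (of_nat n - 1) (x (n - 2)) (x (n - 1)) (x n) = 0"
    "R (of_nat n - 2) (x (n - 3)) (x (n - 2)) (x (n - 1)) = 0"
    "R (of_nat n - 3) (x (n - 4)) (x (n - 3)) (x (n - 2)) = 0"
    "R (of_nat n - 4) (x (n - 5)) (x (n - 4)) (x (n - 3)) = 0"
    by (rule rec_at; use \<open>n \<ge> 5\<close> in \<open>simp add: of_nat_diff\<close>)+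
  then have "Dn c n * (x (n + 1) - (beta0 a c n * x n + beta1 a c w n * x (n - 1)
      + beta2 a c w n * x (n - 2) + beta3 a c w n * x (n - 3) + beta4 a c w n * x (n - 4)
      + beta5 c w n * x (n - 5))) = 0"
    using six_term_combination[OF D, where a = a and w = w and x = x] unfolding R_def by simp
  with D show ?thesis by simp
qed

lemma betas_even:
  "beta1 a c (- p) n = beta1 a c p n" "beta2 a c (- p) n = beta2 a c p n"
  "beta3 a c (- p) n = beta3 a c p n" "beta4 a c (- p) n = beta4 a c p n"
  "beta5 c (- p) n = beta5 c p n"
  by (simp_all add: beta1_def beta2_def beta3_def beta4_def beta5_def)

theorem theorem2p10:
  fixes a c p :: complex and u :: "nat \<Rightarrow> complex"
  assumes hc: "\<forall>k::nat. c \<noteq> - of_nat k"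
    and hc2: "c \<noteq> 2"
    and hu: "\<forall>z::complex. (\<lambda>n. u n * z ^ n) sums (cosh (p * z) * kummerM a c z)"
  shows "u 0 = 1 \<and>
    u 1 = a / c \<and>
    u 2 = a*(a+1) / (2*c*(c+1)) + p^2 / 2 \<and>
    u 3 = a*p^2 / (2*c) + a*(a+1)*(a+2) / (6*c*(c+1)*(c+2)) \<and>
    u 4 = a*(a+1)*p^2 / (4*c*(c+1)) + a*(a+1)*(a+2)*(a+3) / (24*c*(c+1)*(c+2)*(c+3)) + p^4 / 24 \<and>
    u 5 = a*p^4 / (24*c) + a*(a+1)*(a+2)*p^2 / (12*c*(c+1)*(c+2))
               + a*(a+1)*(a+2)*(a+3)*(a+4) / (120*c*(c+1)*(c+2)*(c+3)*(c+4)) \<and>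
    (\<forall>n\<ge>5. u (n+1) = beta0 a c n * u n + beta1 a c p n * u (n-1) + beta2 a c p n * u (n-2)
                       + beta3 a c p n * u (n-3) + beta4 a c p n * u (n-4) + beta5 c p n * u (n-5))"
proof -
  define G where "G w = fps_exp w * kummer_fps a c" for w
  define U where "U = fps_const (1/2) * (fps_exp p + fps_exp (- p)) * kummer_fps a c"
  have "(\<lambda>z. cosh (p * z) * kummerM a c z) has_fps_expansion Abs_fps u"
    using hu by (intro has_fps_expansion_if_sums) auto
  moreover have "(\<lambda>z. cosh (p * z) * kummerM a c z) has_fps_expansion U"
    unfolding U_def
    by (rule has_fps_expansion_mult[OF cosh_has_fps_expansion kummerM_has_fps_expansion[OF hc]])
  ultimately have "Abs_fps u = U"
    by (rule fps_expansion_unique_complex)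
  then have u: "u n = fps_nth U n" for n
    by (metis fps_nth_Abs_fps)
  have "U = fps_const (1/2) * (G p + G (- p))"
    unfolding U_def G_def by (simp add: algebra_simps)
  then have U_nth: "fps_nth U n = (fps_nth (G p) n + fps_nth (G (- p)) n) / 2" for n
    by simp
  have rec: "exp_kummer_residual a c w (of_nat k + 1) (fps_nth (G w) k) (fps_nth (G w) (k + 1))
               (fps_nth (G w) (k + 2)) = 0" for w k
    unfolding G_def
    by (intro exp_kummer_ode_imp_residual_eq_0 fps_exp_mult_kummer_ode kummer_fps_ode hc)
  have "u (n + 1) = beta0 a c n * u n + beta1 a c p n * u (n - 1) + beta2 a c p n * u (n - 2)
          + beta3 a c p n * u (n - 3) + beta4 a c p n * u (n - 4) + beta5 c p n * u (n - 5)"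
    if "n \<ge> 5" for n
  proof -
    have D: "Dn c n \<noteq> 0" using Dn_nonzero[OF hc hc2] that by simp
    note six_term_recurrence[OF rec D that]
    from this[of p] this[of "- p"] show ?thesis
      unfolding u U_nth betas_even by (simp add: field_simps)
  qed
  then show ?thesis
    unfolding u U_def cosh_mult_fps_nth_0_to_5 kummer_fps_nth_0_to_5 by (simp add: field_simps)
qed

end
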